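(* Let $\mathcal{N}$ be a 2-step nilpotent Lie algebra over $\mathbb{R}$ and suppose $\mathcal{N}=\mathcal{N}_0\oplus\mathcal{A}$ is a direct sum of ideals with $\mathcal{A}$ abelian and $[\mathcal{N}_0,\mathcal{N}_0]=\mathfrak{z}(\mathcal{N}_0)$, the center of $\mathcal{N}_0$. Then every Lie ring automorphism $f$ of $\mathcal{N}$ has the form $f=\mu\circ g$, where $\mu$ is a central automorphism of $\mathcal{N}$ and $g$ is a Lie ring automorphism of $\mathcal{N}$ with $g(\mathcal{N}_0)=\mathcal{N}_0$ and $g(Y)=Y$ for all $Y\in\mathcal{A}$. In particular, if $\mathcal{N}_0$ satisfies the partial automatic continuity, then so does $\mathcal{N}$.
   Context: A Lie ring automorphism of a real Lie algebra is a bijective additive map preserving the bracket (not necessarily $\mathbb{R}$-linear). A central automorphism is a Lie ring automorphism $\mu$ with $\mu(x)-x$ in the center for all $x$. Field automorphisms: if a Lie algebra is a direct sum of ideals $\mathcal{N}_1\oplus\cdots\oplus\mathcal{N}_k$, for each $\mathcal{N}_i$ that is the realification of a complex Lie algebra choose a $\mathbb{C}$-basis $e_1,\dots,e_m$ and a field automorphism $\varphi$ of $\mathbb{C}$ fixing the structure constants and set $\sigma_i(\sum x_le_l)=\sum\varphi(x_l)e_l$, otherwise $\sigma_i=\mathrm{id}$; $\sigma_1\times\cdots\times\sigma_k$ is a field automorphism. A real nilpotent Lie algebra satisfies the partial automatic continuity if every Lie ring automorphism is a composition $\mu\circ\overline{f}\circ\sigma$ of a central automorphism $\mu$, an $\mathbb{R}$-linear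 Lie algebra automorphism $\overline{f}$ and a field automorphism $\sigma$. *)

theory Defs
  imports "HOL-Analysis.Analysis"
begin

definition lie_algebra :: "'a::real_vector set \<Rightarrow> ('a \<Rightarrow> 'a \<Rightarrow> 'a) \<Rightarrow> bool" where
  "lie_algebra S br \<longleftrightarrow> subspace S \<and>
     (\<forall>x\<in>S. \<forall>y\<in>S. br x y \<in> S) \<and>
     (\<forall>a::real. \<forall>x\<in>S. \<forall>y\<in>S. \<forall>z\<in>S. br (a *\<^sub>R x + y) z = a *\<^sub>R br x z + br y z) \<and>
     (\<forall>a::real. \<forall>x\<in>S. \<forall>y\<in>S. \<forall>z\<in>S. br z (a *\<^sub>R x + y) = a *\<^sub>R br z x + br z y) \<and>
     (\<forall>x\<in>S. br x x = 0) \<and>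
     (\<forall>x\<in>S. \<forall>y\<in>S. \<forall>z\<in>S. br x (br y z) + br y (br z x) + br z (br x y) = 0)"

definition lie_ideal :: "'a::real_vector set \<Rightarrow> ('a \<Rightarrow> 'a \<Rightarrow> 'a) \<Rightarrow> 'a set \<Rightarrow> bool" where
  "lie_ideal S br I \<longleftrightarrow> subspace I \<and> I \<subseteq> S \<and> (\<forall>x\<in>S. \<forall>y\<in>I. br x y \<in> I)"

definition lie_center :: "'a::real_vector set \<Rightarrow> ('a \<Rightarrow> 'a \<Rightarrow> 'a) \<Rightarrow> 'a set" where
  "lie_center S br = {z\<in>S. \<forall>x\<in>S. br z x = 0}"

definition derived :: "'a::real_vector set \<Rightarrow> ('a \<Rightarrow> 'a \<Rightarrow> 'a) \<Rightarrow> 'a set" where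
  "derived S br = span {br x y | x y. x \<in> S \<and> y \<in> S}"

definition two_step_nilpotent :: "'a::real_vector set \<Rightarrow> ('a \<Rightarrow> 'a \<Rightarrow> 'a) \<Rightarrow> bool" where
  "two_step_nilpotent S br \<longleftrightarrow>
     (\<forall>x\<in>S. \<forall>y\<in>S. \<forall>z\<in>S. br x (br y z) = 0) \<and> (\<exists>x\<in>S. \<exists>y\<in>S. br x y \<noteq> 0)"

definition lie_abelian :: "'a::real_vector set \<Rightarrow> ('a \<Rightarrow> 'a \<Rightarrow> 'a) \<Rightarrow> bool" where
  "lie_abelian S br \<longleftrightarrow> (\<forall>x\<in>S. \<forall>y\<in>S. br x y = 0)"

text \<open>Lie ring automorphism: bijective additive bracket-preserving map (not necessarily R-linear).\<close>
definition lie_ring_aut :: "'a::real_vector set \<Rightarrow> ('a \<Rightarrow> 'a \<Rightarrow> 'a) \<Rightarrow> ('a \<Rightarrow> 'a) \<Rightarrow> bool" where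
  "lie_ring_aut S br f \<longleftrightarrow> bij_betw f S S \<and>
     (\<forall>x\<in>S. \<forall>y\<in>S. f (x + y) = f x + f y) \<and>
     (\<forall>x\<in>S. \<forall>y\<in>S. f (br x y) = br (f x) (f y))"

definition lie_alg_aut :: "'a::real_vector set \<Rightarrow> ('a \<Rightarrow> 'a \<Rightarrow> 'a) \<Rightarrow> ('a \<Rightarrow> 'a) \<Rightarrow> bool" where
  "lie_alg_aut S br f \<longleftrightarrow> lie_ring_aut S br f \<and> (\<forall>c::real. \<forall>x\<in>S. f (c *\<^sub>R x) = c *\<^sub>R f x)"

definition central_aut :: "'a::real_vector set \<Rightarrow> ('a \<Rightarrow> 'a \<Rightarrow> 'a) \<Rightarrow> ('a \<Rightarrow> 'a) \<Rightarrow> bool" where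
  "central_aut S br \<mu> \<longleftrightarrow> lie_ring_aut S br \<mu> \<and> (\<forall>x\<in>S. \<mu> x - x \<in> lie_center S br)"

text \<open>Field automorphisms of the complex numbers (arbitrary, not necessarily continuous).\<close>
definition complex_field_aut :: "(complex \<Rightarrow> complex) \<Rightarrow> bool" where
  "complex_field_aut \<phi> \<longleftrightarrow> bij \<phi> \<and> (\<forall>a b. \<phi> (a + b) = \<phi> a + \<phi> b) \<and> (\<forall>a b. \<phi> (a * b) = \<phi> a * \<phi> b)"

definition cscale :: "('a::real_vector \<Rightarrow> 'a) \<Rightarrow> complex \<Rightarrow> 'a \<Rightarrow> 'a" where
  "cscale J c v = Re c *\<^sub>R v + Im c *\<^sub>R J v"

text \<open>I (with the bracket br) is the realification of a complex Lie algebra,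
i.e. carries a complex structure J for which the bracket is complex bilinear.\<close>
definition complex_structure :: "'a::real_vector set \<Rightarrow> ('a \<Rightarrow> 'a \<Rightarrow> 'a) \<Rightarrow> ('a \<Rightarrow> 'a) \<Rightarrow> bool" where
  "complex_structure I br J \<longleftrightarrow> (\<forall>v\<in>I. J v \<in> I) \<and>
     (\<forall>a::real. \<forall>v\<in>I. \<forall>w\<in>I. J (a *\<^sub>R v + w) = a *\<^sub>R J v + J w) \<and>
     (\<forall>v\<in>I. J (J v) = - v) \<and>
     (\<forall>x\<in>I. \<forall>y\<in>I. br (J x) y = J (br x y))"

definition complex_basis :: "'a::real_vector set \<Rightarrow> ('a \<Rightarrow> 'a) \<Rightarrow> nat \<Rightarrow> (nat \<Rightarrow> 'a) \<Rightarrow> bool" where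
  "complex_basis I J m e \<longleftrightarrow> (\<forall>l<m. e l \<in> I) \<and>
     (\<forall>v\<in>I. \<exists>x. v = (\<Sum>l<m. cscale J (x l) (e l))) \<and>
     (\<forall>x. (\<Sum>l<m. cscale J (x l) (e l)) = 0 \<longrightarrow> (\<forall>l<m. x l = 0))"

text \<open>Admissible factor sigma_i on the ideal I: either the identity, or, if I is the
realification of a complex Lie algebra, the map induced by a field automorphism phi of C
fixing the structure constants w.r.t. a C-basis.\<close>
definition factor_field_aut :: "'a::real_vector set \<Rightarrow> ('a \<Rightarrow> 'a \<Rightarrow> 'a) \<Rightarrow> ('a \<Rightarrow> 'a) \<Rightarrow> bool" where
  "factor_field_aut I br \<sigma> \<longleftrightarrow> (\<forall>v\<in>I. \<sigma> v = v) \<or>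
     (\<exists>J m e \<phi>. complex_structure I br J \<and> complex_basis I J m e \<and> complex_field_aut \<phi> \<and>
        (\<forall>i<m. \<forall>j<m. \<exists>c. br (e i) (e j) = (\<Sum>l<m. cscale J (c l) (e l)) \<and> (\<forall>l<m. \<phi> (c l) = c l)) \<and>
        (\<forall>x. \<sigma> (\<Sum>l<m. cscale J (x l) (e l)) = (\<Sum>l<m. cscale J (\<phi> (x l)) (e l))))"

text \<open>sigma is a field automorphism of (S, br): S = N_0 + ... + N_(k-1) is a direct sum
of ideals and sigma = sigma_0 \<times> ... \<times> sigma_(k-1) with admissible factors.\<close>
definition field_aut :: "'a::real_vector set \<Rightarrow> ('a \<Rightarrow> 'a \<Rightarrow> 'a) \<Rightarrow> ('a \<Rightarrow> 'a) \<Rightarrow> bool" where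
  "field_aut S br \<sigma> \<longleftrightarrow> (\<exists>k::nat. \<exists>N :: nat \<Rightarrow> 'a set. \<exists>\<sigma>s :: nat \<Rightarrow> 'a \<Rightarrow> 'a.
     (\<forall>i<k. lie_ideal S br (N i)) \<and>
     S = {(\<Sum>i<k. xs i) | xs. \<forall>i<k. xs i \<in> N i} \<and>
     (\<forall>xs. (\<forall>i<k. xs i \<in> N i) \<and> (\<Sum>i<k. xs i) = 0 \<longrightarrow> (\<forall>i<k. xs i = 0)) \<and>
     (\<forall>i<k. factor_field_aut (N i) br (\<sigma>s i)) \<and>
     (\<forall>xs. (\<forall>i<k. xs i \<in> N i) \<longrightarrow> \<sigma> (\<Sum>i<k. xs i) = (\<Sum>i<k. \<sigma>s i (xs i))))"

definition partial_automatic_continuity :: "'a::real_vector set \<Rightarrow> ('a \<Rightarrow> 'a \<Rightarrow> 'a) \<Rightarrow> bool" where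
  "partial_automatic_continuity S br \<longleftrightarrow>
     (\<forall>f. lie_ring_aut S br f \<longrightarrow>
        (\<exists>\<mu> fbar \<sigma>. central_aut S br \<mu> \<and> lie_alg_aut S br fbar \<and> field_aut S br \<sigma> \<and>
           (\<forall>x\<in>S. f x = \<mu> (fbar (\<sigma> x)))))"

end

theory Submission
  imports Defs
begin

(* Since A is abelian and [N0, A] lies in N0 \<inter> A = 0, the ideal A is central and every
   bracket only sees N0-components. For a Lie ring automorphism f, the N0-component
   h = proj0 \<circ> f of f restricted to N0 is a Lie ring automorphism of N0: if h X = 0 then
   f X \<in> A is central, so X \<in> z(N0) \<subseteq> [N0, N0] and f X \<in> [N, N] \<subseteq> N0, whence f X = 0;
   surjectivity uses the same stem condition z(N0) \<subseteq> [N0, N0] for f\<inverse>. Then g = h \<oplus> id_A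
   and \<mu> = f \<circ> g\<inverse> satisfy \<mu>(g y) - g y = projA (f (proj0 y)) + (f (projA y) - projA y),
   a central element. For the second claim, decompose g on N0 by partial automatic continuity
   of N0 and extend each factor by the identity on A; the field automorphism acquires A as
   one more ideal, with identity factor. *)

lemma lie_ring_aut_zero:
  assumes "lie_ring_aut S br f" and "0 \<in> S"
  shows "f 0 = 0"
proof -
  have "f (0 + 0) = f 0 + f 0" using assms unfolding lie_ring_aut_def by blast
  then show ?thesis by simp
qed

lemma lie_ring_aut_comp:
  assumes "lie_ring_aut S br f" and "lie_ring_aut S br g"
  shows "lie_ring_aut S br (f \<circ> g)"
proof -
  have "g x \<in> S" if "x \<in> S" for x
    using assms(2) that unfolding lie_ring_aut_def bij_betw_def by blast
  then show ?thesis using assms unfolding lie_ring_aut_def by (auto intro: bij_betw_trans)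
qed

lemma lie_ring_aut_inv:
  assumes f: "lie_ring_aut UNIV br f"
  shows "lie_ring_aut UNIV br (inv f)"
proof -
  have "bij f" and add: "\<And>a b. f (a + b) = f a + f b"
    and hom: "\<And>a b. f (br a b) = br (f a) (f b)"
    using f unfolding lie_ring_aut_def by auto
  then have f_inv: "\<And>a. f (inv f a) = a" and inv_f: "\<And>a. inv f (f a) = a"
    by (simp_all add: bij_is_surj surj_f_inv_f bij_is_inj inv_f_f)
  have "inv f (x + y) = inv f (f (inv f x + inv f y))" for x y
    by (simp add: add f_inv)
  moreover have "inv f (br x y) = inv f (f (br (inv f x) (inv f y)))" for x y
    by (simp add: hom f_inv)
  ultimately show ?thesis
    using \<open>bij f\<close> bij_imp_bij_inv unfolding lie_ring_aut_def inv_f by blast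
qed

lemma lie_ring_aut_restrict:
  assumes "lie_ring_aut UNIV br g" and "g ` T = T"
  shows "lie_ring_aut T br g"
  using assms unfolding lie_ring_aut_def bij_betw_def by (auto intro: inj_on_subset)

lemma lie_ring_aut_center_iff:
  assumes f: "lie_ring_aut UNIV br f"
  shows "f z \<in> lie_center UNIV br \<longleftrightarrow> z \<in> lie_center UNIV br"
proof -
  have "bij f" and hom: "\<And>x. f (br z x) = br (f z) (f x)"
    using f unfolding lie_ring_aut_def by auto
  have "f z \<in> lie_center UNIV br \<longleftrightarrow> (\<forall>x. br (f z) (f x) = 0)"
    unfolding lie_center_def using \<open>bij f\<close> bij_pointE by (auto, metis)
  also have "\<dots> \<longleftrightarrow> (\<forall>x. f (br z x) = f 0)"
    using hom lie_ring_aut_zero[OF f] by simp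
  also have "\<dots> \<longleftrightarrow> z \<in> lie_center UNIV br"
    using \<open>bij f\<close> unfolding lie_center_def by (simp add: bij_is_inj inj_eq)
  finally show ?thesis .
qed

lemma factor_field_aut_mem:
  assumes I: "subspace I" and \<sigma>: "factor_field_aut I br \<sigma>" and v: "v \<in> I"
  shows "\<sigma> v \<in> I"
  using \<sigma> unfolding factor_field_aut_def
proof (elim disjE exE conjE)
  assume "\<forall>v\<in>I. \<sigma> v = v"
  then show ?thesis using v by simp
next
  fix J m e \<phi>
  assume J: "complex_structure I br J" and e: "complex_basis I J m e"
    and \<sigma>_eq: "\<forall>x. \<sigma> (\<Sum>l<m. cscale J (x l) (e l)) = (\<Sum>l<m. cscale J (\<phi> (x l)) (e l))"
  obtain x where x: "v = (\<Sum>l<m. cscale J (x l) (e l))"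
    using e v unfolding complex_basis_def by blast
  have "e l \<in> I" and "J (e l) \<in> I" if "l < m" for l
    using J e that unfolding complex_basis_def complex_structure_def by blast+
  then have "(\<Sum>l<m. cscale J (\<phi> (x l)) (e l)) \<in> I"
    by (auto simp: cscale_def intro!: subspace_sum[OF I] subspace_add[OF I] subspace_scale[OF I])
  then show ?thesis using \<sigma>_eq x by simp
qed

lemma field_aut_mem:
  assumes "field_aut S br \<sigma>" and "x \<in> S"
  shows "\<sigma> x \<in> S"
proof -
  obtain k :: nat and N \<sigma>s where ideal: "\<forall>i<k. lie_ideal S br (N i)"
    and span: "S = {(\<Sum>i<k. xs i) | xs. \<forall>i<k. xs i \<in> N i}"
    and factor: "\<forall>i<k. factor_field_aut (N i) br (\<sigma>s i)"
    and \<sigma>_eq: "\<forall>xs. (\<forall>i<k. xs i \<in> N i) \<longrightarrow> \<sigma> (\<Sum>i<k. xs i) = (\<Sum>i<k. \<sigma>s i (xs i))"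
    using assms(1) unfolding field_aut_def by (elim exE conjE) (rule that; assumption)
  obtain xs where xs: "\<forall>i<k. xs i \<in> N i" and x: "x = (\<Sum>i<k. xs i)"
    using assms(2) span by blast
  have "\<forall>i<k. \<sigma>s i (xs i) \<in> N i"
    using factor_field_aut_mem ideal factor xs unfolding lie_ideal_def by blast
  then have "(\<Sum>i<k. \<sigma>s i (xs i)) \<in> S"
    using span by (auto intro!: exI[of _ "\<lambda>i. \<sigma>s i (xs i)"])
  then show ?thesis using \<sigma>_eq xs x by simp
qed

definition internal_direct_sum :: "'a::real_vector set \<Rightarrow> nat \<Rightarrow> (nat \<Rightarrow> 'a set) \<Rightarrow> bool" where
  "internal_direct_sum S k N \<longleftrightarrow> S = {(\<Sum>i<k. xs i) | xs. \<forall>i<k. xs i \<in> N i} \<and>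
     (\<forall>xs. (\<forall>i<k. xs i \<in> N i) \<and> (\<Sum>i<k. xs i) = 0 \<longrightarrow> (\<forall>i<k. xs i = 0))"

lemma field_aut_iff:
  "field_aut S br \<sigma> \<longleftrightarrow> (\<exists>k N \<sigma>s. (\<forall>i<k. lie_ideal S br (N i)) \<and> internal_direct_sum S k N \<and>
     (\<forall>i<k. factor_field_aut (N i) br (\<sigma>s i)) \<and>
     (\<forall>xs. (\<forall>i<k. xs i \<in> N i) \<longrightarrow> \<sigma> (\<Sum>i<k. xs i) = (\<Sum>i<k. \<sigma>s i (xs i))))"
  by (simp only: field_aut_def internal_direct_sum_def conj_assoc)

locale univ_lie_algebra =
  fixes br :: "'a::real_vector \<Rightarrow> 'a \<Rightarrow> 'a"
  assumes lie_algebra: "lie_algebra UNIV br"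
begin

lemma bracket_add_left: "br (x + y) z = br x z + br y z"
proof -
  have "br (1 *\<^sub>R x + y) z = 1 *\<^sub>R br x z + br y z"
    using lie_algebra unfolding lie_algebra_def by blast
  then show ?thesis by simp
qed

lemma bracket_add_right: "br z (x + y) = br z x + br z y"
proof -
  have "br z (1 *\<^sub>R x + y) = 1 *\<^sub>R br z x + br z y"
    using lie_algebra unfolding lie_algebra_def by blast
  then show ?thesis by simp
qed

lemma bracket_zero_left [simp]: "br 0 z = 0"
  using bracket_add_left[of 0 0 z] by simp

lemma bracket_scaleR_left: "br (a *\<^sub>R x) z = a *\<^sub>R br x z"
proof -
  have "br (a *\<^sub>R x + 0) z = a *\<^sub>R br x z + br 0 z"
    using lie_algebra unfolding lie_algebra_def by blast
  then show ?thesis by simp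
qed

lemma bracket_diff_left: "br (x - y) z = br x z - br y z"
  using bracket_add_left[of "x - y" y z] by (simp add: algebra_simps)

lemma bracket_antisym: "br x y = - br y x"
proof -
  have alt: "br w w = 0" for w
    using lie_algebra unfolding lie_algebra_def by blast
  have "0 = br (x + y) (x + y)" by (simp only: alt)
  also have "\<dots> = br x x + br y x + (br x y + br y y)"
    by (simp only: bracket_add_left bracket_add_right)
  also have "\<dots> = br x y + br y x" by (simp add: alt add.commute)
  finally have "br x y + br y x = 0" by (rule sym)
  then show ?thesis by (simp add: eq_neg_iff_add_eq_0)
qed

lemma lie_center_UNIV_iff: "z \<in> lie_center UNIV br \<longleftrightarrow> (\<forall>x. br z x = 0)"
  by (simp add: lie_center_def)

lemma lie_center_add:
  "a \<in> lie_center UNIV br \<Longrightarrow> b \<in> lie_center UNIV br \<Longrightarrow> a + b \<in> lie_center UNIV br"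
  by (simp add: lie_center_UNIV_iff bracket_add_left)

lemma lie_center_diff:
  "a \<in> lie_center UNIV br \<Longrightarrow> b \<in> lie_center UNIV br \<Longrightarrow> a - b \<in> lie_center UNIV br"
  by (simp add: lie_center_UNIV_iff bracket_diff_left)

lemma central_aut_comp:
  assumes \<mu>: "central_aut UNIV br \<mu>" and \<nu>: "central_aut UNIV br \<nu>"
  shows "central_aut UNIV br (\<mu> \<circ> \<nu>)"
proof -
  have "(\<mu> \<circ> \<nu>) x - x = (\<mu> (\<nu> x) - \<nu> x) + (\<nu> x - x)" for x by simp
  moreover have "\<mu> (\<nu> x) - \<nu> x \<in> lie_center UNIV br" and "\<nu> x - x \<in> lie_center UNIV br" for x
    using \<mu> \<nu> unfolding central_aut_def by blast+
  ultimately have "(\<mu> \<circ> \<nu>) x - x \<in> lie_center UNIV br" for x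
    by (simp only: lie_center_add)
  then show ?thesis
    using \<mu> \<nu> lie_ring_aut_comp unfolding central_aut_def by blast
qed

text \<open>A Lie ring automorphism is only additive, but a real multiple of a bracket is again
  a bracket, so the image of a span of brackets stays in the span of brackets.\<close>
lemma lie_ring_aut_derived:
  assumes f: "lie_ring_aut UNIV br f" and z: "z \<in> derived T br"
  shows "f z \<in> derived UNIV br"
  using z unfolding derived_def
proof (induction rule: span_induct_alt)
  case base
  then show ?case using lie_ring_aut_zero[OF f] by (simp add: span_zero)
next
  case (step c x y)
  then obtain u v where "x = br u v" by blast
  then have "c *\<^sub>R x = br (c *\<^sub>R u) v" by (simp add: bracket_scaleR_left)
  then have "f (c *\<^sub>R x + y) = br (f (c *\<^sub>R u)) (f v) + f y"
    using f unfolding lie_ring_aut_def by simp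
  then show ?case using step(2) by (auto intro: span_add span_base)
qed

end

locale abelian_complement = univ_lie_algebra +
  fixes N0 A :: "'a::real_vector set"
  assumes ideal_N0: "lie_ideal UNIV br N0" and ideal_A: "lie_ideal UNIV br A"
    and N0_Int_A: "N0 \<inter> A = {0}" and N0_plus_A: "N0 + A = UNIV"
    and abelian_A: "lie_abelian A br"
begin

lemma subspace_N0: "subspace N0" and subspace_A: "subspace A"
  using ideal_N0 ideal_A unfolding lie_ideal_def by blast+

lemma decomposition:
  obtains X Y where "X \<in> N0" and "Y \<in> A" and "x = X + Y"
  using N0_plus_A set_plus_elim by (metis UNIV_I)

lemma decomposition_unique:
  assumes "X \<in> N0" "Y \<in> A" "X' \<in> N0" "Y' \<in> A" and "X + Y = X' + Y'"
  shows "X = X'" and "Y = Y'"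
proof -
  have "X - X' = Y' - Y"
    using assms(5) by (simp add: algebra_simps eq_diff_eq diff_eq_eq)
  moreover have "X - X' \<in> N0" and "Y' - Y \<in> A"
    using assms subspace_N0 subspace_A by (simp_all add: subspace_diff)
  ultimately have "X - X' = 0" using N0_Int_A by (metis IntI singletonD)
  then show "X = X'" by simp
  then show "Y = Y'" using assms(5) by simp
qed

lemma A_subset_center: "A \<subseteq> lie_center UNIV br"
proof
  fix a assume a: "a \<in> A"
  have "br a u = 0" for u
  proof -
    obtain X Y where X: "X \<in> N0" and Y: "Y \<in> A" and u: "u = X + Y" by (rule decomposition)
    have "br a Y = 0" using abelian_A a Y unfolding lie_abelian_def by blast
    moreover have "br a X \<in> N0" using ideal_N0 X unfolding lie_ideal_def by blast
    moreover have "br a X \<in> A"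
      using ideal_A a subspace_A bracket_antisym[of a X] unfolding lie_ideal_def
      by (metis UNIV_I subspace_neg)
    ultimately show ?thesis using N0_Int_A u by (auto simp: bracket_add_right)
  qed
  then show "a \<in> lie_center UNIV br" by (simp add: lie_center_UNIV_iff)
qed

lemma bracket_A_left: "a \<in> A \<Longrightarrow> br a u = 0"
  using A_subset_center by (auto simp: lie_center_UNIV_iff)

lemma bracket_A_right: "a \<in> A \<Longrightarrow> br u a = 0"
  using bracket_A_left[of a u] bracket_antisym[of u a] by simp

definition proj0 :: "'a \<Rightarrow> 'a" where
  "proj0 x = (THE X. X \<in> N0 \<and> x - X \<in> A)"

definition projA :: "'a \<Rightarrow> 'a" where
  "projA x = x - proj0 x"

lemma proj0_eq: assumes "X \<in> N0" and "Y \<in> A" shows "proj0 (X + Y) = X"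
  unfolding proj0_def
proof (rule the_equality)
  show "X \<in> N0 \<and> X + Y - X \<in> A" using assms by simp
next
  fix X' assume "X' \<in> N0 \<and> X + Y - X' \<in> A"
  then show "X' = X" using decomposition_unique(1)[OF _ _ assms, of X' "X + Y - X'"] by simp
qed

lemma projA_eq: "X \<in> N0 \<Longrightarrow> Y \<in> A \<Longrightarrow> projA (X + Y) = Y"
  by (simp add: projA_def proj0_eq)

lemma proj0_in: "proj0 x \<in> N0"
  by (rule decomposition[of x]) (simp add: proj0_eq)

lemma projA_in: "projA x \<in> A"
  by (rule decomposition[of x]) (simp add: projA_eq)

lemma proj0_projA [simp]: "proj0 x + projA x = x"
  by (simp add: projA_def)

lemma proj0_N0: "X \<in> N0 \<Longrightarrow> proj0 X = X"
  using proj0_eq[of X 0] subspace_0[OF subspace_A] by simp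

lemma proj0_A: "Y \<in> A \<Longrightarrow> proj0 Y = 0"
  using proj0_eq[of 0 Y] subspace_0[OF subspace_N0] by simp

lemma projA_N0: "X \<in> N0 \<Longrightarrow> projA X = 0"
  by (simp add: projA_def proj0_N0)

lemma projA_A: "Y \<in> A \<Longrightarrow> projA Y = Y"
  using projA_eq[of 0 Y] subspace_0[OF subspace_N0] by simp

lemma proj0_add: "proj0 (x + y) = proj0 x + proj0 y"
proof -
  have "x + y = (proj0 x + proj0 y) + (projA x + projA y)"
    by (simp add: projA_def)
  then show ?thesis
    using proj0_eq proj0_in projA_in subspace_N0 subspace_A by (simp add: subspace_add)
qed

lemma proj0_diff: "proj0 (x - y) = proj0 x - proj0 y"
  using proj0_add[of "x - y" y] by simp

lemma projA_add: "projA (x + y) = projA x + projA y"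
  by (simp add: projA_def proj0_add)

lemma proj0_scaleR: "proj0 (c *\<^sub>R x) = c *\<^sub>R proj0 x"
proof -
  have "c *\<^sub>R x = c *\<^sub>R proj0 x + c *\<^sub>R projA x"
    by (simp flip: scaleR_right_distrib)
  then show ?thesis
    using proj0_eq proj0_in projA_in subspace_N0 subspace_A by (simp add: subspace_scale)
qed

lemma projA_scaleR: "projA (c *\<^sub>R x) = c *\<^sub>R projA x"
  by (simp add: projA_def proj0_scaleR scaleR_diff_right)

lemma bracket_proj0: "br x y = br (proj0 x) (proj0 y)"
proof -
  have "br x y = br (proj0 x + projA x) (proj0 y + projA y)" by simp
  also have "\<dots> = br (proj0 x) (proj0 y)"
    by (simp add: bracket_add_left bracket_add_right bracket_A_left bracket_A_right projA_in
        del: proj0_projA)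
  finally show ?thesis .
qed

lemma bracket_in_N0: "br x y \<in> N0"
  using ideal_N0 proj0_in bracket_proj0 unfolding lie_ideal_def by (metis UNIV_I)

lemma derived_UNIV_subset_N0: "derived UNIV br \<subseteq> N0"
  unfolding derived_def by (rule span_minimal) (auto simp: bracket_in_N0 subspace_N0)

lemma lie_center_N0_subset: "lie_center N0 br \<subseteq> lie_center UNIV br"
proof
  fix z assume z: "z \<in> lie_center N0 br"
  then have "proj0 z = z" using proj0_N0 unfolding lie_center_def by simp
  then have "br z u = br z (proj0 u)" for u
    using bracket_proj0[of z u] by simp
  then show "z \<in> lie_center UNIV br"
    using z proj0_in unfolding lie_center_def by simp
qed

lemma proj0_lie_center:
  assumes "z \<in> lie_center UNIV br"
  shows "proj0 z \<in> lie_center N0 br"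
proof -
  have "br (proj0 z) u = br z u" if "u \<in> N0" for u
    using bracket_proj0[of z u] proj0_N0[OF that] by simp
  then show ?thesis using assms proj0_in unfolding lie_center_def by simp
qed

definition extend :: "('a \<Rightarrow> 'a) \<Rightarrow> 'a \<Rightarrow> 'a" where
  "extend h x = h (proj0 x) + projA x"

lemma extend_N0: "X \<in> N0 \<Longrightarrow> extend h X = h X"
  by (simp add: extend_def proj0_N0 projA_N0)

lemma extend_A: "h 0 = 0 \<Longrightarrow> Y \<in> A \<Longrightarrow> extend h Y = Y"
  by (simp add: extend_def proj0_A projA_A)

lemma extend_id: "extend id x = x"
  by (simp add: extend_def)

lemma extend_cong: "(\<And>X. X \<in> N0 \<Longrightarrow> h X = h' X) \<Longrightarrow> extend h = extend h'"
  by (simp add: extend_def proj0_in fun_eq_iff)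

lemma proj0_extend: "(\<And>X. X \<in> N0 \<Longrightarrow> h X \<in> N0) \<Longrightarrow> proj0 (extend h x) = h (proj0 x)"
  by (simp add: extend_def proj0_eq proj0_in projA_in)

lemma projA_extend: "(\<And>X. X \<in> N0 \<Longrightarrow> h X \<in> N0) \<Longrightarrow> projA (extend h x) = projA x"
  by (simp add: extend_def projA_eq proj0_in projA_in)

lemma extend_comp:
  assumes "\<And>X. X \<in> N0 \<Longrightarrow> h X \<in> N0"
  shows "extend g (extend h x) = extend (g \<circ> h) x"
  using assms by (simp add: extend_def [of g] proj0_extend projA_extend) (simp add: extend_def)

lemma extend_self:
  assumes "lie_ring_aut UNIV br g" and "\<forall>Y\<in>A. g Y = Y"
  shows "extend g = g"
proof
  fix x
  have "g x = g (proj0 x) + g (projA x)"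
    using assms(1) proj0_projA unfolding lie_ring_aut_def by (metis UNIV_I)
  then show "extend g x = g x" using assms(2) projA_in by (simp add: extend_def)
qed

lemma lie_ring_aut_extend:
  assumes h: "lie_ring_aut N0 br h"
  shows "lie_ring_aut UNIV br (extend h)"
proof -
  have bij: "bij_betw h N0 N0"
    and add: "\<And>x y. x \<in> N0 \<Longrightarrow> y \<in> N0 \<Longrightarrow> h (x + y) = h x + h y"
    and hom: "\<And>x y. x \<in> N0 \<Longrightarrow> y \<in> N0 \<Longrightarrow> h (br x y) = br (h x) (h y)"
    using h unfolding lie_ring_aut_def by blast+
  let ?h' = "inv_into N0 h"
  have into: "\<And>X. X \<in> N0 \<Longrightarrow> h X \<in> N0" and into': "\<And>X. X \<in> N0 \<Longrightarrow> ?h' X \<in> N0"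
    using bij bij_betw_inv_into unfolding bij_betw_def by blast+
  have "extend ?h' \<circ> extend h = id"
    using bij extend_cong[of "?h' \<circ> h" id]
    by (auto simp: extend_comp into extend_id bij_betw_def inv_into_f_f)
  moreover have "extend h \<circ> extend ?h' = id"
    using bij extend_cong[of "h \<circ> ?h'" id]
    by (auto simp: extend_comp into' extend_id bij_betw_def f_inv_into_f)
  ultimately have "bij (extend h)" by (rule o_bij)
  moreover have "extend h (x + y) = extend h x + extend h y" for x y
    by (simp add: extend_def proj0_add projA_add add proj0_in)
  moreover have "extend h (br x y) = br (extend h x) (extend h y)" for x y
  proof -
    have "extend h (br x y) = h (br (proj0 x) (proj0 y))"
      by (simp add: extend_N0 bracket_in_N0 flip: bracket_proj0)
    also have "\<dots> = br (proj0 (extend h x)) (proj0 (extend h y))"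
      by (simp add: hom proj0_in proj0_extend into)
    finally show ?thesis by (simp flip: bracket_proj0)
  qed
  ultimately show ?thesis unfolding lie_ring_aut_def by blast
qed

lemma extend_image_N0: "h ` N0 = N0 \<Longrightarrow> extend h ` N0 = N0"
  by (simp add: extend_N0)

lemma lie_alg_aut_extend:
  assumes "lie_alg_aut N0 br h"
  shows "lie_alg_aut UNIV br (extend h)"
  using assms lie_ring_aut_extend unfolding lie_alg_aut_def
  by (simp add: extend_def proj0_scaleR projA_scaleR proj0_in scaleR_right_distrib)

lemma central_aut_extend:
  assumes "central_aut N0 br \<mu>"
  shows "central_aut UNIV br (extend \<mu>)"
proof -
  have "extend \<mu> x - x = \<mu> (proj0 x) - proj0 x" for x
    by (simp add: extend_def projA_def)
  then have "extend \<mu> x - x \<in> lie_center UNIV br" for x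
    using assms proj0_in lie_center_N0_subset unfolding central_aut_def by auto
  then show ?thesis using assms lie_ring_aut_extend unfolding central_aut_def by blast
qed

lemma lie_ring_aut_lie_center_N0:
  assumes stem: "lie_center N0 br \<subseteq> derived N0 br" and f: "lie_ring_aut UNIV br f"
    and z: "z \<in> lie_center N0 br"
  shows "f z \<in> N0"
  using lie_ring_aut_derived[OF f] stem z derived_UNIV_subset_N0 by blast

lemma inj_on_proj0_comp:
  assumes stem: "lie_center N0 br \<subseteq> derived N0 br" and f: "lie_ring_aut UNIV br f"
  shows "inj_on (proj0 \<circ> f) N0"
proof (rule inj_onI)
  fix x y assume x: "x \<in> N0" and y: "y \<in> N0" and eq: "(proj0 \<circ> f) x = (proj0 \<circ> f) y"
  have add: "\<And>a b. f (a + b) = f a + f b" and "bij f"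
    using f unfolding lie_ring_aut_def by blast+
  define d where "d = x - y"
  have "f d = f x - f y" using add[of d y] by (simp add: d_def eq_diff_eq)
  then have "proj0 (f d) = 0" using eq by (simp add: proj0_diff)
  then have "f d \<in> A" using proj0_projA[of "f d"] projA_in[of "f d"] by simp
  then have "d \<in> lie_center UNIV br"
    using A_subset_center lie_ring_aut_center_iff[OF f] by blast
  moreover have "d \<in> N0" using x y subspace_N0 by (simp add: d_def subspace_diff)
  ultimately have "d \<in> lie_center N0 br" unfolding lie_center_def by simp
  then have "f d \<in> N0" by (rule lie_ring_aut_lie_center_N0[OF stem f])
  with \<open>f d \<in> A\<close> have "f d = 0" using N0_Int_A by blast
  then have "f d = f 0" by (simp add: lie_ring_aut_zero[OF f])
  then have "d = 0" using \<open>bij f\<close> by (simp add: bij_is_inj inj_eq)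
  then show "x = y" by (simp add: d_def)
qed

lemma proj0_comp_image:
  assumes stem: "lie_center N0 br \<subseteq> derived N0 br" and f: "lie_ring_aut UNIV br f"
  shows "(proj0 \<circ> f) ` N0 = N0"
proof
  show "(proj0 \<circ> f) ` N0 \<subseteq> N0" using proj0_in by auto
next
  have add: "\<And>a b. f (a + b) = f a + f b" and "bij f"
    using f unfolding lie_ring_aut_def by blast+
  show "N0 \<subseteq> (proj0 \<circ> f) ` N0"
  proof
    fix Z assume Z: "Z \<in> N0"
    obtain W where W: "Z = f W" using \<open>bij f\<close> by (metis bij_pointE)
    define X where "X = inv f (proj0 (f (projA W)))"
      \<comment> \<open>the A-part of W contributes a central element of N0, which f reaches from N0\<close>
  have "f (projA W) \<in> lie_center UNIV br"
      using lie_ring_aut_center_iff[OF f] A_subset_center projA_in by blast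
    then have "proj0 (f (projA W)) \<in> lie_center N0 br" by (rule proj0_lie_center)
    then have X: "X \<in> N0"
      unfolding X_def by (rule lie_ring_aut_lie_center_N0[OF stem lie_ring_aut_inv[OF f]])
    have fX: "f X = proj0 (f (projA W))"
      using \<open>bij f\<close> by (simp add: X_def bij_is_surj surj_f_inv_f)
    have "Z = proj0 (f (proj0 W + projA W))" using Z W by (simp add: proj0_N0)
    also have "\<dots> = proj0 (f (proj0 W)) + proj0 (f X)"
      by (simp add: add proj0_add fX proj0_N0 proj0_in del: proj0_projA)
    also have "\<dots> = (proj0 \<circ> f) (proj0 W + X)" by (simp add: add proj0_add)
    finally have "Z = (proj0 \<circ> f) (proj0 W + X)" .
    moreover have "proj0 W + X \<in> N0" using X proj0_in subspace_N0 by (simp add: subspace_add)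
    ultimately show "Z \<in> (proj0 \<circ> f) ` N0" by (rule image_eqI)
  qed
qed

lemma lie_ring_aut_proj0_comp:
  assumes stem: "lie_center N0 br \<subseteq> derived N0 br" and f: "lie_ring_aut UNIV br f"
  shows "lie_ring_aut N0 br (proj0 \<circ> f)"
proof -
  have add: "\<And>a b. f (a + b) = f a + f b" and hom: "\<And>a b. f (br a b) = br (f a) (f b)"
    using f unfolding lie_ring_aut_def by blast+
  have "(proj0 \<circ> f) (br x y) = br ((proj0 \<circ> f) x) ((proj0 \<circ> f) y)" for x y
    using bracket_proj0[of "f x" "f y"] by (simp add: hom proj0_N0 bracket_in_N0)
  then show ?thesis
    using inj_on_proj0_comp[OF assms] proj0_comp_image[OF assms]
    unfolding lie_ring_aut_def bij_betw_def by (simp add: add proj0_add)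
qed

theorem central_factorization:
  assumes stem: "lie_center N0 br \<subseteq> derived N0 br" and f: "lie_ring_aut UNIV br f"
  obtains \<mu> g where "central_aut UNIV br \<mu>" and "lie_ring_aut UNIV br g"
    and "g ` N0 = N0" and "\<forall>Y\<in>A. g Y = Y" and "f = \<mu> \<circ> g"
proof -
  define g where "g = extend (proj0 \<circ> f)"
  have h: "lie_ring_aut N0 br (proj0 \<circ> f)" by (rule lie_ring_aut_proj0_comp[OF stem f])
  have g: "lie_ring_aut UNIV br g" and g_N0: "g ` N0 = N0" and g_A: "\<forall>Y\<in>A. g Y = Y"
    using lie_ring_aut_extend[OF h] extend_image_N0 proj0_comp_image[OF stem f]
      extend_A lie_ring_aut_zero[OF h subspace_0[OF subspace_N0]]
    by (auto simp: g_def)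
  have "bij g" using g unfolding lie_ring_aut_def by blast
  define \<mu> where "\<mu> = f \<circ> inv g"
  have f_eq: "f = \<mu> \<circ> g" using \<open>bij g\<close> by (simp add: \<mu>_def fun_eq_iff bij_is_inj)
  have "\<mu> u - u \<in> lie_center UNIV br" for u
  proof -
    obtain y where u: "u = g y" using \<open>bij g\<close> by (metis bij_pointE)
    have "f y = f (proj0 y) + f (projA y)"
      using f unfolding lie_ring_aut_def by (metis UNIV_I proj0_projA)
    moreover have "\<mu> u = f y" using f_eq u by (metis comp_apply)
    ultimately have "\<mu> u - u = projA (f (proj0 y)) + (f (projA y) - projA y)"
      using u by (simp add: g_def extend_def projA_def)
    moreover have "projA (f (proj0 y)) \<in> lie_center UNIV br" and "projA y \<in> lie_center UNIV br"
      using A_subset_center projA_in by blast+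
    moreover have "f (projA y) \<in> lie_center UNIV br"
      using lie_ring_aut_center_iff[OF f] \<open>projA y \<in> lie_center UNIV br\<close> by blast
    ultimately show ?thesis by (simp add: lie_center_add lie_center_diff)
  qed
  moreover have "lie_ring_aut UNIV br \<mu>"
    unfolding \<mu>_def by (rule lie_ring_aut_comp[OF f lie_ring_aut_inv[OF g]])
  ultimately have "central_aut UNIV br \<mu>" unfolding central_aut_def by blast
  then show thesis using g g_N0 g_A f_eq by (rule that)
qed

lemma lie_ideal_of_N0:
  assumes "lie_ideal N0 br I"
  shows "lie_ideal UNIV br I"
proof -
  have I: "subspace I" "I \<subseteq> N0" and closed: "\<And>x y. x \<in> N0 \<Longrightarrow> y \<in> I \<Longrightarrow> br x y \<in> I"
    using assms unfolding lie_ideal_def by blast+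
  have "br x y \<in> I" if "y \<in> I" for x y
  proof -
    have "br x y = br (proj0 x) y"
      using bracket_proj0[of x y] proj0_N0[of y] that I(2) by auto
    then show ?thesis using closed[OF proj0_in that] by simp
  qed
  then show ?thesis using I unfolding lie_ideal_def by blast
qed

lemma internal_direct_sum_extend:
  assumes "internal_direct_sum N0 k N"
  shows "internal_direct_sum UNIV (Suc k) (N(k := A))"
proof -
  have span: "N0 = {(\<Sum>i<k. xs i) | xs. \<forall>i<k. xs i \<in> N i}"
    and indep: "\<And>xs. \<forall>i<k. xs i \<in> N i \<Longrightarrow> (\<Sum>i<k. xs i) = 0 \<Longrightarrow> \<forall>i<k. xs i = 0"
    using assms unfolding internal_direct_sum_def by blast+
  have mem: "(\<forall>i<Suc k. xs i \<in> (N(k := A)) i) \<longleftrightarrow> (\<forall>i<k. xs i \<in> N i) \<and> xs k \<in> A" for xs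
    by (auto simp: less_Suc_eq)
  have "z \<in> {(\<Sum>i<Suc k. xs i) | xs. \<forall>i<Suc k. xs i \<in> (N(k := A)) i}" for z
  proof -
    obtain ys where ys: "\<forall>i<k. ys i \<in> N i" and proj0_z: "proj0 z = (\<Sum>i<k. ys i)"
      using span proj0_in by blast
    have "(\<Sum>i<k. (ys(k := projA z)) i) = (\<Sum>i<k. ys i)" by (rule sum.cong) auto
    then have "z = (\<Sum>i<Suc k. (ys(k := projA z)) i)" by (simp add: proj0_z [symmetric])
    moreover have "\<forall>i<Suc k. (ys(k := projA z)) i \<in> (N(k := A)) i"
      unfolding mem using ys projA_in by simp
    ultimately show ?thesis by blast
  qed
  moreover have "\<forall>i<Suc k. xs i = 0"
    if "\<forall>i<Suc k. xs i \<in> (N(k := A)) i" and "(\<Sum>i<Suc k. xs i) = 0" for xs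
  proof -
    have xs: "\<forall>i<k. xs i \<in> N i" and "xs k \<in> A" using that(1) unfolding mem by blast+
    moreover have "(\<Sum>i<k. xs i) \<in> N0" using span xs by blast
    moreover have "(\<Sum>i<k. xs i) + xs k = 0 + 0" using that(2) by simp
    ultimately have "(\<Sum>i<k. xs i) = 0" and "xs k = 0"
      using decomposition_unique subspace_0[OF subspace_N0] subspace_0[OF subspace_A] by blast+
    then show ?thesis using indep[OF xs] less_Suc_eq by auto
  qed
  ultimately show ?thesis unfolding internal_direct_sum_def by blast
qed

lemma field_aut_extend:
  assumes "field_aut N0 br \<sigma>"
  shows "field_aut UNIV br (extend \<sigma>)"
proof -
  obtain k N \<sigma>s where ideal: "\<forall>i<k. lie_ideal N0 br (N i)"
    and sum: "internal_direct_sum N0 k N"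
    and factor: "\<forall>i<k. factor_field_aut (N i) br (\<sigma>s i)"
    and \<sigma>_eq: "\<forall>xs. (\<forall>i<k. xs i \<in> N i) \<longrightarrow> \<sigma> (\<Sum>i<k. xs i) = (\<Sum>i<k. \<sigma>s i (xs i))"
    using assms unfolding field_aut_iff by (elim exE conjE) (rule that; assumption)
  have "\<forall>i<Suc k. lie_ideal UNIV br ((N(k := A)) i)"
    using ideal ideal_A lie_ideal_of_N0 by (auto simp: less_Suc_eq)
  moreover have "\<forall>i<Suc k. factor_field_aut ((N(k := A)) i) br ((\<sigma>s(k := id)) i)"
    using factor by (auto simp: less_Suc_eq factor_field_aut_def)
  moreover have "extend \<sigma> (\<Sum>i<Suc k. xs i) = (\<Sum>i<Suc k. (\<sigma>s(k := id)) i (xs i))"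
    if "\<forall>i<Suc k. xs i \<in> (N(k := A)) i" for xs
  proof -
    have xs: "\<forall>i<k. xs i \<in> N i" and "xs k \<in> A" using that by (auto simp: less_Suc_eq)
    moreover have "(\<Sum>i<k. xs i) \<in> N0"
      using sum xs unfolding internal_direct_sum_def by blast
    ultimately have "extend \<sigma> (\<Sum>i<Suc k. xs i) = (\<Sum>i<k. \<sigma>s i (xs i)) + xs k"
      using \<sigma>_eq by (simp add: extend_def proj0_eq projA_eq)
    also have "(\<Sum>i<k. \<sigma>s i (xs i)) = (\<Sum>i<k. (\<sigma>s(k := id)) i (xs i))"
      by (rule sum.cong) auto
    finally show ?thesis by simp
  qed
  ultimately show ?thesis
    unfolding field_aut_iff using internal_direct_sum_extend[OF sum]
    by (intro exI[of _ "Suc k"] exI[of _ "N(k := A)"] exI[of _ "\<sigma>s(k := id)"]) blast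
qed

theorem partial_automatic_continuity_extend:
  assumes stem: "lie_center N0 br \<subseteq> derived N0 br"
    and pac: "partial_automatic_continuity N0 br"
  shows "partial_automatic_continuity UNIV br"
  unfolding partial_automatic_continuity_def
proof (intro allI impI)
  fix f assume f: "lie_ring_aut UNIV br f"
  obtain \<mu> g where \<mu>: "central_aut UNIV br \<mu>" and g: "lie_ring_aut UNIV br g"
    and g_N0: "g ` N0 = N0" and g_A: "\<forall>Y\<in>A. g Y = Y" and f_eq: "f = \<mu> \<circ> g"
    by (rule central_factorization[OF stem f])
  obtain \<mu>0 g0 \<sigma>0 where \<mu>0: "central_aut N0 br \<mu>0" and g0: "lie_alg_aut N0 br g0"
    and \<sigma>0: "field_aut N0 br \<sigma>0" and g_eq: "\<forall>x\<in>N0. g x = \<mu>0 (g0 (\<sigma>0 x))"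
    using pac lie_ring_aut_restrict[OF g g_N0] unfolding partial_automatic_continuity_def by blast
  have "\<And>X. X \<in> N0 \<Longrightarrow> g0 X \<in> N0" and "\<And>X. X \<in> N0 \<Longrightarrow> \<sigma>0 X \<in> N0"
    using g0 field_aut_mem[OF \<sigma>0] unfolding lie_alg_aut_def lie_ring_aut_def bij_betw_def by blast+
  then have "extend \<mu>0 \<circ> extend g0 \<circ> extend \<sigma>0 = extend (\<mu>0 \<circ> g0 \<circ> \<sigma>0)"
    by (simp add: fun_eq_iff extend_comp o_assoc)
  also have "\<dots> = extend g"
    using g_eq by (intro extend_cong) simp
  also have "\<dots> = g" by (rule extend_self[OF g g_A])
  finally have g_eq': "extend \<mu>0 \<circ> extend g0 \<circ> extend \<sigma>0 = g" .
  show "\<exists>\<mu> fbar \<sigma>. central_aut UNIV br \<mu> \<and> lie_alg_aut UNIV br fbar \<and>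
      field_aut UNIV br \<sigma> \<and> (\<forall>x\<in>UNIV. f x = \<mu> (fbar (\<sigma> x)))"
  proof (intro exI conjI ballI)
    show "central_aut UNIV br (\<mu> \<circ> extend \<mu>0)"
      by (rule central_aut_comp[OF \<mu> central_aut_extend[OF \<mu>0]])
    show "lie_alg_aut UNIV br (extend g0)" by (rule lie_alg_aut_extend[OF g0])
    show "field_aut UNIV br (extend \<sigma>0)" by (rule field_aut_extend[OF \<sigma>0])
    show "f x = (\<mu> \<circ> extend \<mu>0) (extend g0 (extend \<sigma>0 x))" for x
      by (simp add: f_eq flip: g_eq')
  qed
qed

end

theorem proposition3p4:
  fixes br :: "'a::euclidean_space \<Rightarrow> 'a \<Rightarrow> 'a"
    and N0 A :: "'a set"
  assumes "lie_algebra UNIV br"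
    and "two_step_nilpotent UNIV br"
    and "lie_ideal UNIV br N0" and "lie_ideal UNIV br A"
    and "N0 \<inter> A = {0}" and "N0 + A = UNIV"
    and "lie_abelian A br"
    and "derived N0 br = lie_center N0 br"
  shows "(\<forall>f. lie_ring_aut UNIV br f \<longrightarrow>
            (\<exists>\<mu> g. central_aut UNIV br \<mu> \<and> lie_ring_aut UNIV br g \<and>
                   g ` N0 = N0 \<and> (\<forall>Y\<in>A. g Y = Y) \<and> f = \<mu> \<circ> g))
       \<and> (partial_automatic_continuity N0 br \<longrightarrow> partial_automatic_continuity UNIV br)"
proof -
  interpret abelian_complement br N0 A
    using assms(1,3-7) by unfold_locales
  have stem: "lie_center N0 br \<subseteq> derived N0 br" using assms(8) by simp
  have "\<exists>\<mu> g. central_aut UNIV br \<mu> \<and> lie_ring_aut UNIV br g \<and>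
      g ` N0 = N0 \<and> (\<forall>Y\<in>A. g Y = Y) \<and> f = \<mu> \<circ> g" if f: "lie_ring_aut UNIV br f" for f
  proof -
    obtain \<mu> g where "central_aut UNIV br \<mu>" and "lie_ring_aut UNIV br g"
      and "g ` N0 = N0" and "\<forall>Y\<in>A. g Y = Y" and "f = \<mu> \<circ> g"
      by (rule central_factorization[OF stem f])
    then show ?thesis by blast
  qed
  then show ?thesis using partial_automatic_continuity_extend[OF stem] by blast
qed

end
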